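(* Let $n$ be odd, let $p'$ be a prime divisor of $n$, and let $A=L(n;p')$. Let $p$ be a prime divisor of $n$ which is coprime with $n'=n/p$. Then $S(n')\subseteq f(A)$, where $f:\mathbb{Z}_n\to\mathbb{Z}_{n'}$ is the natural map.
   Context: $U(m)$ is the unit group of $\mathbb{Z}_m$. For odd $m=\prod p_i^{r_i}$, a prime $p\mid m$ and $a\in U(m)$, $\left(\frac{a}{p}\right)$ is the Legendre symbol of the image of $a$ in $\mathbb{Z}_p$ and $\left(\frac{a}{m}\right)=\prod\left(\frac{a}{p_i}\right)^{r_i}$ is the Jacobi symbol; $S(m)$ is the kernel of $a\mapsto\left(\frac{a}{m}\right)$ on $U(m)$, and for a prime $p'\mid m$, $L(m;p')=\{a\in U(m):\left(\frac{a}{m}\right)=\left(\frac{a}{p'}\right)\}$. The natural map $\mathbb{Z}_n\to\mathbb{Z}_{n'}$ is $a+n\mathbb{Z}\mapsto a+n'\mathbb{Z}$. *)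

theory Defs
  imports "HOL-Number_Theory.Number_Theory"
begin

text \<open>Elements of Z_m are represented by their canonical representatives 0..m-1.\<close>

definition units_mod :: "nat \<Rightarrow> int set" where
  "units_mod m = {a. 0 \<le> a \<and> a < int m \<and> coprime a (int m)}"

definition jacobi :: "int \<Rightarrow> nat \<Rightarrow> int" where
  "jacobi a m = (\<Prod>p\<in>prime_factors m. Legendre a (int p) ^ multiplicity p m)"

definition S_set :: "nat \<Rightarrow> int set" where
  "S_set m = {a \<in> units_mod m. jacobi a m = 1}"

definition L_set :: "nat \<Rightarrow> nat \<Rightarrow> int set" where
  "L_set m p' = {a \<in> units_mod m. jacobi a m = Legendre a (int p')}"

definition nat_map :: "nat \<Rightarrow> int \<Rightarrow> int" where
  "nat_map n' a = a mod int n'"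

end

theory Submission
  imports Defs "HOL-Number_Theory.Residue_Primitive_Roots"
begin

text \<open>
  Write \<open>n = p n'\<close> with \<open>p\<close> coprime to \<open>n'\<close>, so that \<open>(a/n) = (a/p) (a/n')\<close>.
  Given \<open>b \<in> S(n')\<close> and a sign \<open>\<epsilon>\<close>, the Chinese remainder theorem lifts \<open>b\<close> to a unit
  \<open>a\<close> of \<open>\<int>\<^sub>n\<close> whose residue mod \<open>p\<close> has Legendre symbol \<open>\<epsilon>\<close> (quadratic non-residues
  exist mod the odd prime \<open>p\<close>); then \<open>(a/n) = \<epsilon> (b/n') = \<epsilon>\<close>. Taking \<open>\<epsilon> = (b/p')\<close> when
  \<open>p' \<noteq> p\<close>, and \<open>\<epsilon> = 1\<close> when \<open>p' = p\<close>, gives \<open>(a/n) = (a/p')\<close>.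
\<close>

lemma Legendre_cong:
  assumes "[a = b] (mod p)"
  shows "Legendre a p = Legendre b p"
proof -
  have "[a = 0] (mod p) \<longleftrightarrow> [b = 0] (mod p)"
    using assms by (meson cong_sym cong_trans)
  moreover have "QuadRes p a \<longleftrightarrow> QuadRes p b"
    using assms unfolding QuadRes_def by (meson cong_sym cong_trans)
  ultimately show ?thesis
    by (simp add: Legendre_def)
qed

lemma Legendre_one:
  assumes "prime p"
  shows "Legendre 1 (int p) = 1"
proof -
  have "\<not> [1 = 0] (mod int p)"
    using prime_gt_1_nat[OF assms] by (simp add: cong_0_iff)
  moreover have "QuadRes (int p) 1"
    unfolding QuadRes_def by (rule exI[of _ 1]) simp
  ultimately show ?thesis
    by (simp add: Legendre_def)
qed

lemma Legendre_eq_0_iff_dvd: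
  "Legendre a p = 0 \<longleftrightarrow> p dvd a"
  by (simp add: Legendre_def cong_0_iff)

lemma Legendre_primroot:
  fixes p g :: nat
  assumes "prime p" "p > 2" "residue_primroot p g"
  shows "Legendre (int g) (int p) = -1"
proof (rule ccontr)
  assume "Legendre (int g) (int p) \<noteq> -1"
  moreover have "\<not> int p dvd int g"
    using assms(1,3) by (metis coprime_absorb_left int_dvd_int_iff not_prime_unit residue_primroot_def)
  ultimately have "Legendre (int g) (int p) = 1"
    by (auto simp: Legendre_def cong_0_iff split: if_splits)
  with euler_criterion[OF assms(1,2), of "int g"]
  have "[g ^ ((p - 1) div 2) = 1] (mod p)"
    by (metis cong_int_iff cong_sym of_nat_1 of_nat_power)
  then have "ord p g dvd (p - 1) div 2"
    using ord_divides by blast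
  moreover have "ord p g = p - 1"
    using assms(1,3) by (simp add: residue_primroot_def totient_prime)
  moreover have "(p - 1) div 2 > 0"
    using assms(2) by simp
  ultimately have "p - 1 \<le> (p - 1) div 2"
    by (metis dvd_imp_le)
  with assms(2) show False
    by simp
qed

lemma exists_Legendre_eq:
  fixes p :: nat
  assumes "prime p" "odd p" "\<epsilon> \<in> {1, -1}"
  shows "\<exists>c. Legendre c (int p) = \<epsilon>"
proof (cases "\<epsilon> = 1")
  case True
  then show ?thesis
    using Legendre_one[OF assms(1)] by blast
next
  case False
  obtain g where "residue_primroot p g"
    using prime_primitive_root_exists prime_gt_1_nat assms(1) by blast
  moreover have "p > 2"
    using assms(1,2) prime_ge_2_nat[OF assms(1)] by (cases "p = 2") auto
  ultimately show ?thesis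
    using False assms Legendre_primroot by blast
qed

lemma Legendre_units_mod:
  assumes "b \<in> units_mod m" "prime q" "q dvd m"
  shows "Legendre b (int q) \<in> {1, -1}"
proof -
  have "\<not> int q dvd b"
    using assms by (auto simp: units_mod_def dest: coprime_common_divisor)
  then show ?thesis
    by (auto simp: Legendre_def cong_0_iff)
qed

lemma jacobi_cong:
  assumes "[a = b] (mod int m)"
  shows "jacobi a m = jacobi b m"
  unfolding jacobi_def
proof (rule prod.cong[OF refl])
  fix q assume "q \<in> prime_factors m"
  then have "[a = b] (mod int q)"
    using assms cong_dvd_modulus int_dvd_int_iff by blast
  then show "Legendre a (int q) ^ multiplicity q m = Legendre b (int q) ^ multiplicity q m"
    by (simp add: Legendre_cong)
qed

lemma jacobi_mult_prime:
  fixes p m :: nat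
  assumes "prime p" "coprime p m" "m > 0"
  shows "jacobi a (p * m) = Legendre a (int p) * jacobi a m"
proof -
  have p_ndvd: "\<not> p dvd m"
    using assms(1,2) by (metis coprime_absorb_left not_prime_unit)
  then have p_notin: "p \<notin> prime_factors m"
    by auto
  have factors: "prime_factors (p * m) = insert p (prime_factors m)"
    using assms prime_factors_product[of p m] by (auto simp: prime_prime_factors)
  have mult_p: "multiplicity p (p * m) = 1"
    using assms(1,3) p_ndvd prime_elem_multiplicity_mult_distrib[of p p m]
    by (simp add: multiplicity_self not_dvd_imp_multiplicity_0 prime_gt_0_nat)
  have mult_q: "multiplicity q (p * m) = multiplicity q m" if "q \<in> prime_factors m" for q
  proof -
    have "prime q" "q \<noteq> p"
      using that p_notin by auto
    then show ?thesis
      using assms prime_elem_multiplicity_mult_distrib[of q p m] prime_multiplicity_other[of q p]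
      by (simp add: prime_gt_0_nat)
  qed
  show ?thesis
    unfolding jacobi_def factors using p_notin mult_p mult_q by simp
qed

lemma units_mod_lift_Legendre:
  fixes p m :: nat
  assumes "prime p" "odd p" "coprime p m" "b \<in> units_mod m" "\<epsilon> \<in> {1, -1}"
  obtains a where "a \<in> units_mod (p * m)" "nat_map m a = b" "Legendre a (int p) = \<epsilon>"
proof -
  obtain c where c: "Legendre c (int p) = \<epsilon>"
    using exists_Legendre_eq assms(1,2,5) by blast
  have "coprime (int m) (int p)"
    using assms(3) by (simp add: coprime_commute)
  then obtain x where x: "[x = b] (mod int m)" "[x = c] (mod int p)"
    using binary_chinese_remainder_int by blast
  define a where "a = x mod int (p * m)"
  have a_x: "[a = x] (mod int (p * m))"
    by (simp add: a_def cong_def)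
  have dvd_m: "int m dvd int (p * m)" and dvd_p: "int p dvd int (p * m)"
    by simp_all
  have a_b: "[a = b] (mod int m)"
    using cong_trans[OF cong_dvd_modulus[OF a_x dvd_m] x(1)] .
  have a_c: "[a = c] (mod int p)"
    using cong_trans[OF cong_dvd_modulus[OF a_x dvd_p] x(2)] .
  have b_range: "0 \<le> b" "b < int m" and coprime_b: "coprime b (int m)"
    using assms(4) by (auto simp: units_mod_def)
  have Legendre_a: "Legendre a (int p) = \<epsilon>"
    using a_c c by (simp add: Legendre_cong)
  have "coprime a (int m)"
    using cong_imp_coprime[OF cong_sym[OF a_b] coprime_b] .
  moreover have "coprime a (int p)"
  proof -
    have "\<not> int p dvd a"
      using Legendre_a assms(5) by (auto simp: Legendre_eq_0_iff_dvd[symmetric])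
    moreover have "prime (int p)"
      using assms(1) by simp
    ultimately show ?thesis
      using prime_imp_coprime_int coprime_commute by blast
  qed
  moreover have "0 \<le> a" "a < int (p * m)"
    using b_range prime_gt_0_nat[OF assms(1)] by (auto simp: a_def)
  ultimately have "a \<in> units_mod (p * m)"
    by (simp add: units_mod_def)
  moreover have "nat_map m a = b"
    using a_b b_range by (simp add: nat_map_def cong_def)
  ultimately show ?thesis
    using Legendre_a that by blast
qed

theorem lemma3p3:
  fixes n p p' :: nat
  assumes "odd n"
    and "prime p'" and "p' dvd n"
    and "prime p" and "p dvd n" and "coprime p (n div p)"
  shows "S_set (n div p) \<subseteq> nat_map (n div p) ` L_set n p'"
proof
  fix b assume "b \<in> S_set (n div p)"
  define m where "m = n div p"
  then have b_unit: "b \<in> units_mod m" and jacobi_b: "jacobi b m = 1"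
    using \<open>b \<in> S_set (n div p)\<close> by (simp_all add: S_set_def)
  have n_eq: "n = p * m" and "m > 0" and "odd p" and "coprime p m"
    using assms by (auto simp: m_def intro: dvd_trans)
  have p'_dvd_m: "p' dvd m" if "p' \<noteq> p"
    using that assms(2,3,4) n_eq by (metis prime_dvd_mult_iff primes_dvd_imp_eq)
  define \<epsilon> where "\<epsilon> = (if p' = p then 1 else Legendre b (int p'))"
  have "\<epsilon> \<in> {1, -1}"
    using Legendre_units_mod[OF b_unit assms(2) p'_dvd_m] by (simp add: \<epsilon>_def)
  then obtain a where a_unit: "a \<in> units_mod n" and "nat_map m a = b"
      and Legendre_a: "Legendre a (int p) = \<epsilon>"
    using units_mod_lift_Legendre[OF assms(4) \<open>odd p\<close> \<open>coprime p m\<close> b_unit] n_eq by metis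
  then have a_b: "[a = b] (mod int m)"
    unfolding nat_map_def cong_def by (metis mod_mod_trivial)
  have "jacobi a n = \<epsilon>"
    using jacobi_mult_prime[OF assms(4) \<open>coprime p m\<close> \<open>m > 0\<close>] jacobi_cong[OF a_b] jacobi_b
      Legendre_a n_eq by simp
  moreover have "Legendre a (int p') = \<epsilon>" if "p' \<noteq> p"
    using Legendre_cong[OF cong_dvd_modulus[OF a_b]] p'_dvd_m[OF that] that by (simp add: \<epsilon>_def)
  ultimately have "a \<in> L_set n p'"
    using a_unit Legendre_a by (cases "p' = p") (auto simp: L_set_def \<epsilon>_def)
  then show "b \<in> nat_map (n div p) ` L_set n p'"
    using \<open>nat_map m a = b\<close> m_def by blast
qed

end
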